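(* Let $K$ be a field, $\mathcal{H}$ a simple hypergraph on $\{x_1,\dots,x_n\}$ with edges $S_1,\dots,S_m$, let $i,j$ be integers, and let $\mathcal{B}_{i,j}$ be the set of basis elements $\overline{e_{\ell_1,\dots,\ell_i}}$ of $\overline{T}_i$ with $\overline{e_{\ell_1,\dots,\ell_i}}\in\mathrm{Ker}\,\overline{\partial}_i\setminus\mathrm{Im}\,\overline{\partial}_{i+1}$ and $|\bigcup_{k=1}^iS_{\ell_k}|=j$. Then (number of self semi-induced matchings in $\mathcal{H}$ of type $(i,j)$) $\le|\mathcal{B}_{i,j}|\le$ (number of self-contained semi-induced matchings in $\mathcal{H}$ of type $(i,j)$).
   Context: A simple hypergraph $\mathcal{H}$ on $\{x_1,\dots,x_n\}$ is a set $\mathcal{E}(\mathcal{H})$ of subsets (edges) of cardinality at least $2$, none contained in another. With edges ordered $S_1,\dots,S_m$, let $\overline{T}_0=K$ and for $i\ge1$ let $\overline{T}_i$ be the $K$-vector space with basis $\overline{e_{\ell_1,\dots,\ell_i}}$, $1\le\ell_1<\dots<\ell_i\le m$, graded by $\deg\overline{e_{\ell_1,\dots,\ell_i}}=|\bigcup_{t}S_{\ell_t}|$, with differential $\overline{\partial}_i(\overline{e_{\ell_1,\dots,\ell_i}})=\sum_{k:\,S_{\ell_k}\subseteq\bigcup_{t\neq k}S_{\ell_t}}(-1)^k\,\overline{e_{\ell_1,\dots,\widehat{\ell_k},\dots,\ell_i}}$ (the Taylor resolution of $R/I(\mathcal{H})$ tensored with $K$). For a family $\mathcal{S}=\{E_1,\dots,E_i\}$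 of distinct edges, its type is $(i,j)$ with $j=|\bigcup_\ell E_\ell|$. $\mathcal{S}$ is a self semi-induced matching if no edge outside $\mathcal{S}$ is contained in $\bigcup_\ell E_\ell$ and for all $k$, $E_k\nsubseteq\bigcup_{\ell\neq k}E_\ell$. It is a self-contained semi-induced matching if (i) for each edge $E\notin\mathcal{S}$, either $E\nsubseteq\bigcup_\ell E_\ell$ or there is $k$ with $E_k\subseteq E\cup\bigcup_{\ell\neq k}E_\ell$, and (ii) for all $k$, $E_k\nsubseteq\bigcup_{\ell\neq k}E_\ell$. *)

theory Defs
  imports Main
begin

definition simple_hypergraph :: "'a set \<Rightarrow> 'a set set \<Rightarrow> bool" where
  "simple_hypergraph X Es \<longleftrightarrow> finite X \<and> (\<forall>E\<in>Es. E \<subseteq> X \<and> card E \<ge> 2)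
     \<and> (\<forall>E\<in>Es. \<forall>F\<in>Es. E \<subseteq> F \<longrightarrow> E = F)"

text \<open>Index sets \<open>{l_1 < ... < l_i}\<close> of basis elements of \<open>T_i\<close>, edges ordered S 1, ..., S m.\<close>
definition taylor_basis :: "nat \<Rightarrow> nat \<Rightarrow> nat set set" where
  "taylor_basis m i = {L. L \<subseteq> {1..m} \<and> card L = i}"

text \<open>Basis vector e_L; vectors are finitely supported coefficient functions.\<close>
definition basis_vec :: "nat set \<Rightarrow> nat set \<Rightarrow> 'k::field" where
  "basis_vec L = (\<lambda>L'. if L' = L then 1 else 0)"

text \<open>Differential of a basis element: position of l in L is card {l' in L. l' < l} + 1.\<close>
definition taylor_dbasis :: "(nat \<Rightarrow> 'a set) \<Rightarrow> nat set \<Rightarrow> nat set \<Rightarrow> 'k::field" where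
  "taylor_dbasis S L = (\<lambda>L'. \<Sum>l\<in>L.
      (if L' = L - {l} \<and> S l \<subseteq> \<Union>(S ` (L - {l}))
       then (- 1) ^ (card {l'\<in>L. l' < l} + 1) else 0))"

definition taylor_d :: "(nat \<Rightarrow> 'a set) \<Rightarrow> nat \<Rightarrow> nat \<Rightarrow> (nat set \<Rightarrow> 'k::field) \<Rightarrow> nat set \<Rightarrow> 'k" where
  "taylor_d S m i v = (\<lambda>L'. \<Sum>L\<in>taylor_basis m i. v L * taylor_dbasis S L L')"

definition in_T :: "nat \<Rightarrow> nat \<Rightarrow> (nat set \<Rightarrow> 'k::field) \<Rightarrow> bool" where
  "in_T m i v \<longleftrightarrow> (\<forall>L. L \<notin> taylor_basis m i \<longrightarrow> v L = 0)"

definition taylor_B :: "'k::field itself \<Rightarrow> (nat \<Rightarrow> 'a set) \<Rightarrow> nat \<Rightarrow> nat \<Rightarrow> nat \<Rightarrow> nat set set" where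
  "taylor_B _ S m i j = {L \<in> taylor_basis m i.
      taylor_d S m i (basis_vec L :: nat set \<Rightarrow> 'k) = (\<lambda>_. 0)
    \<and> \<not> (\<exists>v :: nat set \<Rightarrow> 'k. in_T m (i+1) v \<and> taylor_d S m (i+1) v = basis_vec L)
    \<and> card (\<Union>(S ` L)) = j}"

definition has_type :: "'a set set \<Rightarrow> nat \<Rightarrow> nat \<Rightarrow> bool" where
  "has_type F i j \<longleftrightarrow> card F = i \<and> card (\<Union>F) = j"

definition self_semi_induced :: "'a set set \<Rightarrow> 'a set set \<Rightarrow> bool" where
  "self_semi_induced Es F \<longleftrightarrow> F \<subseteq> Es
     \<and> (\<forall>E\<in>Es - F. \<not> E \<subseteq> \<Union>F)
     \<and> (\<forall>E\<in>F. \<not> E \<subseteq> \<Union>(F - {E}))"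

definition self_contained_semi_induced :: "'a set set \<Rightarrow> 'a set set \<Rightarrow> bool" where
  "self_contained_semi_induced Es F \<longleftrightarrow> F \<subseteq> Es
     \<and> (\<forall>E\<in>Es - F. \<not> E \<subseteq> \<Union>F \<or> (\<exists>Ek\<in>F. Ek \<subseteq> E \<union> \<Union>(F - {Ek})))
     \<and> (\<forall>E\<in>F. \<not> E \<subseteq> \<Union>(F - {E}))"

end

theory Submission
  imports Defs
begin

text \<open>Write \<open>F = S ` L\<close> for a family of edges with index set \<open>L\<close>. The differential of
  \<open>e\<^sub>L\<close> vanishes iff no edge of \<open>F\<close> is covered by the others, which is condition (ii) of
  both kinds of matching. The vector \<open>e\<^sub>L\<close> can only occur in the boundary of some
  \<open>e\<^bsub>L \<union> {l}\<^esub>\<close> with \<open>S l \<subseteq> \<Union>F\<close>: if \<open>F\<close> is self semi-induced there is no such \<open>l\<close>, so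
  \<open>e\<^sub>L\<close> is not a boundary. Conversely, if an edge \<open>S l \<notin> F\<close> covered by \<open>\<Union>F\<close> violates
  condition (i) of self-containedness, then \<open>L - {l}\<close> is the only face of \<open>L \<union> {l}\<close>
  that survives the differential, so \<open>\<partial> e\<^bsub>L \<union> {l}\<^esub> = \<plusminus>e\<^sub>L\<close>. Hence \<open>L \<mapsto> S ` L\<close> maps
  \<open>B\<^sub>i\<^sub>,\<^sub>j\<close> injectively into the self-contained families, and its image contains all
  self semi-induced ones.\<close>

lemma finite_taylor_basis: "finite (taylor_basis m i)"
proof -
  have "taylor_basis m i \<subseteq> Pow {1..m}" unfolding taylor_basis_def by auto
  then show ?thesis by (rule finite_subset) simp
qed

lemma taylor_d_smult_basis_vec:
  assumes "L \<in> taylor_basis m i"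
  shows "taylor_d S m i (\<lambda>L'. (c::'k::field) * basis_vec L L') = (\<lambda>L'. c * taylor_dbasis S L L')"
proof
  fix L'
  have "taylor_d S m i (\<lambda>L'. c * basis_vec L L') L'
      = (\<Sum>L''\<in>taylor_basis m i. if L'' = L then c * taylor_dbasis S L L' else 0)"
    unfolding taylor_d_def basis_vec_def by (rule sum.cong) auto
  also have "\<dots> = c * taylor_dbasis S L L'"
    using assms finite_taylor_basis by simp
  finally show "taylor_d S m i (\<lambda>L'. c * basis_vec L L') L' = c * taylor_dbasis S L L'" .
qed

lemma taylor_d_basis_vec:
  assumes "L \<in> taylor_basis m i"
  shows "taylor_d S m i (basis_vec L :: nat set \<Rightarrow> 'k::field) = taylor_dbasis S L"
  using taylor_d_smult_basis_vec[OF assms, of S "1::'k"] by (simp add: fun_eq_iff)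

lemma taylor_dbasis_eq_0:
  assumes "\<And>l. l \<in> L \<Longrightarrow> L' = L - {l} \<Longrightarrow> \<not> S l \<subseteq> \<Union>(S ` (L - {l}))"
  shows "(taylor_dbasis S L L' :: 'k::field) = 0"
  unfolding taylor_dbasis_def using assms by (intro sum.neutral) auto

lemma taylor_dbasis_face:
  assumes "finite L" "l \<in> L"
  shows "(taylor_dbasis S L (L - {l}) :: 'k::field) =
     (if S l \<subseteq> \<Union>(S ` (L - {l})) then (- 1) ^ (card {l'\<in>L. l' < l} + 1) else 0)"
proof -
  have "L - {l} \<noteq> L - {l'}" if "l' \<in> L - {l}" for l'
    using that assms(2) by blast
  then show ?thesis
    unfolding taylor_dbasis_def using assms by (simp add: sum.remove)
qed

lemma taylor_d_basis_vec_eq_0_iff: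
  assumes "L \<in> taylor_basis m i"
  shows "taylor_d S m i (basis_vec L :: nat set \<Rightarrow> 'k::field) = (\<lambda>_. 0)
     \<longleftrightarrow> (\<forall>l\<in>L. \<not> S l \<subseteq> \<Union>(S ` (L - {l})))"
proof
  assume cycle: "taylor_d S m i (basis_vec L :: nat set \<Rightarrow> 'k) = (\<lambda>_. 0)"
  show "\<forall>l\<in>L. \<not> S l \<subseteq> \<Union>(S ` (L - {l}))"
  proof
    fix l assume "l \<in> L"
    moreover have "finite L"
      using assms finite_subset by (auto simp: taylor_basis_def)
    moreover have "(taylor_dbasis S L (L - {l}) :: 'k) = 0"
      using cycle unfolding taylor_d_basis_vec[OF assms] by (simp add: fun_eq_iff)
    ultimately show "\<not> S l \<subseteq> \<Union>(S ` (L - {l}))"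
      using taylor_dbasis_face[of L l S, where 'k = 'k] by (auto split: if_splits)
  qed
next
  assume "\<forall>l\<in>L. \<not> S l \<subseteq> \<Union>(S ` (L - {l}))"
  then show "taylor_d S m i (basis_vec L :: nat set \<Rightarrow> 'k) = (\<lambda>_. 0)"
    unfolding taylor_d_basis_vec[OF assms] by (intro ext taylor_dbasis_eq_0) blast
qed

lemma basis_vec_not_in_image_taylor_d:
  assumes "\<forall>l\<in>{1..m} - L. \<not> S l \<subseteq> \<Union>(S ` L)"
  shows "taylor_d S m n v \<noteq> (basis_vec L :: nat set \<Rightarrow> 'k::field)"
proof -
  have "taylor_dbasis S L'' L = (0::'k)" if "L'' \<in> taylor_basis m n" for L''
  proof (rule taylor_dbasis_eq_0)
    fix l assume l: "l \<in> L''" "L = L'' - {l}"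
    then have "l \<in> {1..m} - L"
      using that by (auto simp: taylor_basis_def subset_iff)
    with assms show "\<not> S l \<subseteq> \<Union>(S ` (L'' - {l}))"
      unfolding l(2)[symmetric] by blast
  qed
  then have "taylor_d S m n v L = 0"
    unfolding taylor_d_def by (intro sum.neutral) simp
  then show ?thesis
    by (auto simp: basis_vec_def fun_eq_iff)
qed

lemma basis_vec_in_image_taylor_d:
  assumes L: "L \<in> taylor_basis m i" and l: "l \<in> {1..m}" "l \<notin> L" "S l \<subseteq> \<Union>(S ` L)"
    and uncovered: "\<forall>k\<in>L. \<not> S k \<subseteq> S l \<union> \<Union>(S ` (L - {k}))"
  shows "\<exists>v. in_T m (i+1) v \<and> taylor_d S m (i+1) v = (basis_vec L :: nat set \<Rightarrow> 'k::field)"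
proof -
  define \<epsilon> :: 'k where "\<epsilon> = (- 1) ^ (card {l'\<in>insert l L. l' < l} + 1)"
  have fin: "finite L"
    using L finite_subset by (auto simp: taylor_basis_def)
  have L': "insert l L \<in> taylor_basis m (i+1)"
    using L l fin by (simp add: taylor_basis_def)
  have face: "taylor_dbasis S (insert l L) L = \<epsilon>"
    using taylor_dbasis_face[of "insert l L" l S] fin l by (simp add: \<epsilon>_def)
  have "taylor_dbasis S (insert l L) L' = (0::'k)" if "L' \<noteq> L" for L'
  proof (rule taylor_dbasis_eq_0)
    fix k assume "k \<in> insert l L" "L' = insert l L - {k}"
    with that l(2) have "k \<in> L" "insert l L - {k} = insert l (L - {k})" by auto
    with uncovered show "\<not> S k \<subseteq> \<Union>(S ` (insert l L - {k}))" by simp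
  qed
  with face have "taylor_dbasis S (insert l L) = (\<lambda>L'. \<epsilon> * basis_vec L L')"
    by (auto simp: basis_vec_def)
  moreover have "\<epsilon> * \<epsilon> = 1"
    by (simp add: \<epsilon>_def flip: power_mult_distrib)
  ultimately have "taylor_d S m (i+1) (\<lambda>L'. \<epsilon> * basis_vec (insert l L) L') = basis_vec L"
    unfolding taylor_d_smult_basis_vec[OF L'] by (simp add: mult.assoc[symmetric])
  moreover have "in_T m (i+1) (\<lambda>L'. \<epsilon> * basis_vec (insert l L) L')"
    using L' by (auto simp: in_T_def basis_vec_def)
  ultimately show ?thesis by blast
qed

lemma inj_on_image_Diff_singleton:
  assumes "inj_on f A" "L \<subseteq> A" "l \<in> A"
  shows "f ` (L - {l}) = f ` L - {f l}"
  using inj_on_image_set_diff[OF assms(1), of L "{l}"] assms(2,3) by auto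

lemma self_semi_induced_imp_taylor_B:
  assumes S: "bij_betw S {1..m} Es" and L: "L \<subseteq> {1..m}"
    and F: "self_semi_induced Es (S ` L)" "has_type (S ` L) i j"
  shows "L \<in> taylor_B TYPE('k::field) S m i j"
proof -
  have inj: "inj_on S {1..m}"
    using S by (rule bij_betw_imp_inj_on)
  have L_basis: "L \<in> taylor_basis m i"
    using L F(2) card_image[OF inj_on_subset[OF inj L]]
    by (simp add: taylor_basis_def has_type_def)
  have "\<not> S l \<subseteq> \<Union>(S ` (L - {l}))" if "l \<in> L" for l
    using F(1) that inj_on_image_Diff_singleton[OF inj L] L
    unfolding self_semi_induced_def by auto
  then have "taylor_d S m i (basis_vec L :: nat set \<Rightarrow> 'k) = (\<lambda>_. 0)"
    using taylor_d_basis_vec_eq_0_iff[OF L_basis] by blast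
  moreover have "\<not> S l \<subseteq> \<Union>(S ` L)" if "l \<in> {1..m} - L" for l
  proof -
    have "S l \<in> Es - S ` L"
      using that bij_betwE[OF S] inj_on_image_mem_iff[OF inj _ L] by blast
    with F(1) show ?thesis
      unfolding self_semi_induced_def by blast
  qed
  then have "taylor_d S m (i+1) v \<noteq> (basis_vec L :: nat set \<Rightarrow> 'k)" for v
    by (intro basis_vec_not_in_image_taylor_d) blast
  ultimately show ?thesis
    using L_basis F(2) by (simp add: taylor_B_def has_type_def)
qed

lemma taylor_B_imp_self_contained:
  assumes S: "bij_betw S {1..m} Es" and B: "L \<in> taylor_B TYPE('k::field) S m i j"
  shows "self_contained_semi_induced Es (S ` L) \<and> has_type (S ` L) i j"
proof -
  have L_basis: "L \<in> taylor_basis m i"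
    and cycle: "taylor_d S m i (basis_vec L :: nat set \<Rightarrow> 'k) = (\<lambda>_. 0)"
    and not_boundary: "\<not> (\<exists>v :: nat set \<Rightarrow> 'k. in_T m (i+1) v \<and> taylor_d S m (i+1) v = basis_vec L)"
    and "card (\<Union>(S ` L)) = j"
    using B by (auto simp: taylor_B_def)
  have L: "L \<subseteq> {1..m}" "card L = i"
    using L_basis by (auto simp: taylor_basis_def)
  have remove: "S ` (L - {k}) = S ` L - {S k}" if "k \<in> L" for k
    using inj_on_image_Diff_singleton[OF bij_betw_imp_inj_on[OF S] L(1)] L(1) that by blast
  have "\<forall>k\<in>L. \<not> S k \<subseteq> \<Union>(S ` (L - {k}))"
    using cycle taylor_d_basis_vec_eq_0_iff[OF L_basis] by blast
  then have ii: "\<forall>E\<in>S ` L. \<not> E \<subseteq> \<Union>(S ` L - {E})"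
    using remove by auto
  have i: "\<not> E \<subseteq> \<Union>(S ` L) \<or> (\<exists>Ek\<in>S ` L. Ek \<subseteq> E \<union> \<Union>(S ` L - {Ek}))"
    if E: "E \<in> Es - S ` L" for E
  proof -
    obtain l where l: "l \<in> {1..m}" "l \<notin> L" "E = S l"
      using E bij_betw_imp_surj_on[OF S] by blast
    have "\<not> (S l \<subseteq> \<Union>(S ` L) \<and> (\<forall>k\<in>L. \<not> S k \<subseteq> S l \<union> \<Union>(S ` (L - {k}))))"
      using basis_vec_in_image_taylor_d[OF L_basis l(1,2)] not_boundary by blast
    with l(3) remove show ?thesis
      by auto
  qed
  have "S ` L \<subseteq> Es" "inj_on S L"
    using S L(1) by (auto simp: bij_betw_def intro: inj_on_subset)
  with i ii L(2) \<open>card (\<Union>(S ` L)) = j\<close> show ?thesis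
    by (simp add: self_contained_semi_induced_def has_type_def card_image)
qed

lemma finite_taylor_B: "finite (taylor_B K S m i j)"
  using finite_taylor_basis by (rule finite_subset[rotated]) (auto simp: taylor_B_def)

lemma inj_on_image_taylor_B:
  assumes "inj_on S {1..m}"
  shows "inj_on ((`) S) (taylor_B K S m i j)"
proof (rule inj_onI)
  fix L L' assume "L \<in> taylor_B K S m i j" "L' \<in> taylor_B K S m i j" and eq: "S ` L = S ` L'"
  then have "L \<subseteq> {1..m}" "L' \<subseteq> {1..m}"
    by (auto simp: taylor_B_def taylor_basis_def)
  then show "L = L'"
    using eq inj_on_image_eq_iff[OF assms] by simp
qed

lemma self_semi_induced_subset_image_taylor_B:
  assumes S: "bij_betw S {1..m} Es"
  shows "{F. self_semi_induced Es F \<and> has_type F i j} \<subseteq> (`) S ` taylor_B TYPE('k::field) S m i j"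
proof
  fix F assume F: "F \<in> {F. self_semi_induced Es F \<and> has_type F i j}"
  then have "F \<subseteq> S ` {1..m}"
    using bij_betw_imp_surj_on[OF S] by (auto simp: self_semi_induced_def)
  then obtain L where L: "L \<subseteq> {1..m}" "F = S ` L"
    by (auto simp: subset_image_iff)
  with F have "L \<in> taylor_B TYPE('k) S m i j"
    by (intro self_semi_induced_imp_taylor_B[OF S]) auto
  with L(2) show "F \<in> (`) S ` taylor_B TYPE('k) S m i j"
    by (rule image_eqI)
qed

theorem lemma2p4:
  fixes X :: "'a set" and Es :: "'a set set" and S :: "nat \<Rightarrow> 'a set"
    and m i j :: nat
  assumes "simple_hypergraph X Es"
    and "bij_betw S {1..m} Es"
  shows "card {F. self_semi_induced Es F \<and> has_type F i j}
           \<le> card (taylor_B TYPE('k::field) S m i j)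
       \<and> card (taylor_B TYPE('k::field) S m i j)
           \<le> card {F. self_contained_semi_induced Es F \<and> has_type F i j}"
proof
  let ?B = "taylor_B TYPE('k::field) S m i j"
  have "card {F. self_semi_induced Es F \<and> has_type F i j} \<le> card ((`) S ` ?B)"
    using self_semi_induced_subset_image_taylor_B[OF assms(2), where 'k = 'k]
      finite_taylor_B[of "TYPE('k)"]
    by (intro card_mono finite_imageI)
  also have "\<dots> \<le> card ?B"
    using finite_taylor_B by (rule card_image_le)
  finally show "card {F. self_semi_induced Es F \<and> has_type F i j} \<le> card ?B" .
next
  let ?B = "taylor_B TYPE('k::field) S m i j"
  have "finite {F. self_contained_semi_induced Es F \<and> has_type F i j}"
  proof (rule finite_subset)
    show "finite (Pow Es)"
      using bij_betw_finite[OF assms(2)] by simp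
  qed (auto simp: self_contained_semi_induced_def)
  moreover have "(`) S ` ?B \<subseteq> {F. self_contained_semi_induced Es F \<and> has_type F i j}"
    using taylor_B_imp_self_contained[OF assms(2)] by blast
  ultimately show "card ?B \<le> card {F. self_contained_semi_induced Es F \<and> has_type F i j}"
    using inj_on_image_taylor_B[OF bij_betw_imp_inj_on[OF assms(2)]]
    by (intro card_inj_on_le)
qed

end
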